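(* Fix integers $N\ge 2$ and $K\ge 1$. For every $r\in\mathbb{N}^+$, $M^{\text{RESCAL}}_{2r+1}$ subsumes $M^{\text{ComplEx}}_r$, i.e. $\pi(\mathcal{M}^{\text{ComplEx}}_r)\subseteq\pi(\mathcal{M}^{\text{RESCAL}}_{2r+1})$.
   Context: There are $N$ entities and $K$ relations. A score-based model assigns a score $s_k(i,j)\in\mathbb{R}$ to each triple, $i,j\in\{1,\dots,N\}$, $k\in\{1,\dots,K\}$; its scoring tensor $\mathcal{S}\in\mathbb{R}^{N\times N\times K}$ has frontal slices $\mathbf{S}_k$ with $[\mathbf{S}_k]_{ij}=s_k(i,j)$. For a real $N\times N$ matrix $\mathbf{S}$, $\pi(\mathbf{S})$ is the matrix of dense ranks: $\pi_{ij}(\mathbf{S})=1+$ (number of distinct values among entries of $\mathbf{S}$ strictly larger than $s_{ij}$). For tensors, $\pi$ acts slicewise; for a set $X$, $\pi(X)=\{\pi(x):x\in X\}$. RESCAL of size $r$: parameters $\mathbf{A}\in\mathbb{R}^{N\times r}$ (rows $\mathbf{a}_i$), $\mathbf{R}_1,\dots,\mathbf{R}_K\in\mathbb{R}^{r\times r}$, score $\mathbf{a}_i^T\mathbf{R}_k\mathbf{a}_j$. ComplEx of size $r$: parameters $\mathbf{A}\in\mathbb{C}^{N\times r}$ (rows $\mathbf{a}_i$), $\mathbf{R}\in\mathbb{C}^{K\times r}$ (rows $\mathbf{r}_k$), score $s_k(i,j)=\mathrm{Re}(\mathbf{a}_i^T\mathrm{diag}(\mathbf{r}_k)\overline{\mathbf{a}_j})$,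 where $\overline{\cdot}$ is complex conjugation. $\mathcal{M}^t_r$ is the set of scoring tensors of all models of type $t$ and size $r$. A class subsumes another if its set of representable ranking tensors $\pi(\mathcal{M})$ contains that of the other. *)

theory Defs
  imports Complex_Main
begin

text \<open>Entities are indexed 0..N-1, relations 0..K-1, embedding coordinates 0..r-1.
  A scoring tensor is a function S i j k (entity i, entity j, relation k).\<close>

type_synonym score_tensor = "nat \<Rightarrow> nat \<Rightarrow> nat \<Rightarrow> real"
type_synonym rank_tensor = "nat \<Rightarrow> nat \<Rightarrow> nat \<Rightarrow> nat"

definition dense_rank :: "nat \<Rightarrow> nat \<Rightarrow> score_tensor \<Rightarrow> rank_tensor" where
  "dense_rank N K S = (\<lambda>i j k. if i < N \<and> j < N \<and> k < K then
      1 + card {v. (\<exists>i' j'. i' < N \<and> j' < N \<and> v = S i' j' k) \<and> v > S i j k}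
    else 0)"

definition rank_set :: "nat \<Rightarrow> nat \<Rightarrow> score_tensor set \<Rightarrow> rank_tensor set" where
  "rank_set N K M = dense_rank N K ` M"

definition rescal_tensors :: "nat \<Rightarrow> nat \<Rightarrow> nat \<Rightarrow> score_tensor set" where
  "rescal_tensors N K r = {S. \<exists>(A :: nat \<Rightarrow> nat \<Rightarrow> real) (R :: nat \<Rightarrow> nat \<Rightarrow> nat \<Rightarrow> real).
      \<forall>i<N. \<forall>j<N. \<forall>k<K. S i j k = (\<Sum>l<r. \<Sum>m<r. A i l * R k l m * A j m)}"

definition complex_tensors :: "nat \<Rightarrow> nat \<Rightarrow> nat \<Rightarrow> score_tensor set" where
  "complex_tensors N K r = {S. \<exists>(A :: nat \<Rightarrow> nat \<Rightarrow> complex) (R :: nat \<Rightarrow> nat \<Rightarrow> complex).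
      \<forall>i<N. \<forall>j<N. \<forall>k<K. S i j k = Re (\<Sum>l<r. A i l * R k l * cnj (A j l))}"

end

theory Submission
  imports Defs
begin

text \<open>Writing each complex coordinate as the real pair (Re, Im), the ComplEx score
  Re (a^T diag(w) conj b) becomes a real bilinear form whose matrix is block diagonal,
  the block of coordinate l being the 2 x 2 matrix of multiplication by w l. So ComplEx of
  size r is RESCAL of size 2r, and RESCAL of size 2r embeds into size 2r + 1 by padding
  the entity embeddings with a zero coordinate.\<close>

definition re_im :: "complex \<Rightarrow> nat \<Rightarrow> real" where
  "re_im z p = (if p = 0 then Re z else Im z)"

definition mult_block :: "complex \<Rightarrow> nat \<Rightarrow> nat \<Rightarrow> real" where
  "mult_block c p q =
     (if p = 0 then (if q = 0 then Re c else Im c) else (if q = 0 then - Im c else Re c))"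

definition block_diag :: "(nat \<Rightarrow> nat \<Rightarrow> nat \<Rightarrow> real) \<Rightarrow> nat \<Rightarrow> nat \<Rightarrow> real" where
  "block_diag C l m = (if l div 2 = m div 2 then C (l div 2) (l mod 2) (m mod 2) else 0)"

lemma Re_mult_cnj_eq_bilinear:
  "Re (a * c * cnj b) = (\<Sum>p<2. \<Sum>q<2. re_im a p * mult_block c p q * re_im b q)"
  by (simp add: numeral_2_eq_2 re_im_def mult_block_def algebra_simps)

lemma sum_lessThan_double:
  "(\<Sum>l<2*n. g l) = (\<Sum>a<n. g (2*a) + g (2*a + 1 :: nat))"
  by (induction n) (auto simp: algebra_simps)

lemma sum_lessThan_two: "(\<Sum>q<2. f q) = f 0 + f (1::nat)"
  by (simp add: numeral_2_eq_2)

lemma bilinear_block_diag: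
  "(\<Sum>l<2*n. \<Sum>m<2*n. x l * block_diag C l m * y m)
     = (\<Sum>a<n. \<Sum>p<2. \<Sum>q<2. x (2*a + p) * C a p q * y (2*a + q))"
proof -
  have inner: "(\<Sum>m<2*n. x l * block_diag C l m * y m)
      = (if l div 2 < n then (\<Sum>q<2. x l * C (l div 2) (l mod 2) q * y (2 * (l div 2) + q)) else 0)"
    for l
  proof -
    have "(\<Sum>m<2*n. x l * block_diag C l m * y m)
        = (\<Sum>b<n. if b = l div 2
             then (\<Sum>q<2. x l * C (l div 2) (l mod 2) q * y (2*b + q)) else 0)"
      by (simp only: sum_lessThan_double sum_lessThan_two, rule sum.cong)
         (auto simp: block_diag_def)
    then show ?thesis by (simp add: sum.delta')
  qed
  show ?thesis
    unfolding inner by (simp only: sum_lessThan_double sum_lessThan_two, rule sum.cong) auto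
qed

lemma complex_tensors_subset_rescal_double:
  "complex_tensors N K r \<subseteq> rescal_tensors N K (2*r)"
proof
  fix S assume "S \<in> complex_tensors N K r"
  then obtain A R where S: "\<forall>i<N. \<forall>j<N. \<forall>k<K. S i j k = Re (\<Sum>l<r. A i l * R k l * cnj (A j l))"
    unfolding complex_tensors_def by blast
  define A' where "A' i l = re_im (A i (l div 2)) (l mod 2)" for i l
  define R' where "R' k = block_diag (\<lambda>a. mult_block (R k a))" for k
  have A'_pair: "A' i (2*a + p) = re_im (A i a) p" if "p < 2" for i a p
    using that by (simp add: A'_def)
  have "(\<Sum>l<2*r. \<Sum>m<2*r. A' i l * R' k l m * A' j m) = Re (\<Sum>l<r. A i l * R k l * cnj (A j l))"
    for i j k
  proof -
    have "(\<Sum>l<2*r. \<Sum>m<2*r. A' i l * R' k l m * A' j m)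
        = (\<Sum>a<r. \<Sum>p<2. \<Sum>q<2. re_im (A i a) p * mult_block (R k a) p q * re_im (A j a) q)"
      unfolding R'_def bilinear_block_diag by (intro sum.cong) (auto simp: A'_pair)
    also have "\<dots> = (\<Sum>a<r. Re (A i a * R k a * cnj (A j a)))"
      by (simp only: Re_mult_cnj_eq_bilinear)
    finally show ?thesis
      by (simp add: Re_sum)
  qed
  with S show "S \<in> rescal_tensors N K (2*r)"
    unfolding rescal_tensors_def by (intro CollectI exI[of _ A'] exI[of _ R']) simp
qed

lemma rescal_tensors_mono:
  assumes "r \<le> r'"
  shows "rescal_tensors N K r \<subseteq> rescal_tensors N K r'"
proof
  fix S assume "S \<in> rescal_tensors N K r"
  then obtain A R where S: "\<forall>i<N. \<forall>j<N. \<forall>k<K. S i j k = (\<Sum>l<r. \<Sum>m<r. A i l * R k l m * A j m)"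
    unfolding rescal_tensors_def by blast
  define A' where "A' i l = (if l < r then A i l else 0)" for i l
  have pad: "(\<Sum>l<r'. f l) = (\<Sum>l<r. f l)" if "\<And>l. r \<le> l \<Longrightarrow> f l = 0" for f :: "nat \<Rightarrow> real"
    using assms that by (intro sum.mono_neutral_right) auto
  have "(\<Sum>l<r'. \<Sum>m<r'. A' i l * R k l m * A' j m) = (\<Sum>l<r. \<Sum>m<r. A i l * R k l m * A j m)"
    for i j k
    by (simp add: pad A'_def)
  with S show "S \<in> rescal_tensors N K r'"
    unfolding rescal_tensors_def by (intro CollectI exI[of _ A'] exI[of _ R]) simp
qed

theorem corollary1:
  fixes N K r :: nat
  assumes "N \<ge> 2" and "K \<ge> 1" and "r \<ge> 1"
  shows "rank_set N K (complex_tensors N K r) \<subseteq> rank_set N K (rescal_tensors N K (2 * r + 1))"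
proof -
  have "complex_tensors N K r \<subseteq> rescal_tensors N K (2 * r + 1)"
    using complex_tensors_subset_rescal_double rescal_tensors_mono[of "2 * r" "2 * r + 1"]
    by (rule subset_trans) simp
  then show ?thesis
    unfolding rank_set_def by (rule image_mono)
qed

end
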